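(* For all $x\ne y$ in $\mathcal X$, $Q^N_{xy}\to Q_{xy}$ uniformly as $N\to\infty$, where $Q_{xy}(\mu)=\sqrt{\pi_y(\mu)/\pi_x(\mu)}\,A_{xy}(\mu)$. In particular, $\mu\mapsto Q_{xy}(\mu)$ is Lipschitz continuous on $\mathcal P(\mathcal X)$ for all $x,y\in\mathcal X$.
   Context: $\mathcal X=\{1,\dots,d\}$ finite, $\mathcal P(\mathcal X)\subset\mathbb R^{\mathcal X}$; for $N\in\mathbb N$, $\mathcal P_N(\mathcal X)=\{\frac1N\sum_{i=1}^N\delta_{x_i}:x_i\in\mathcal X\}$. $K:\mathcal P(\mathcal X)\times\mathcal X\to\mathbb R$ with each $K_x$ twice continuously differentiable on a neighbourhood of $\mathcal P(\mathcal X)$; $U(\mu)=\sum_x\mu_xK_x(\mu)$, $H_x=\partial_{\mu_x}U$, $\pi_x(\mu)=e^{-H_x(\mu)}/\sum_ze^{-H_z(\mu)}$. $\{A(\mu)\}_{\mu\in\mathcal P(\mathcal X)}$ irreducible symmetric nonnegative matrices with $\mu\mapsto A(\mu)$ Lipschitz; $\{A^N(\mu)\}_{\mu\in\mathcal P(\mathcal X),N\in\mathbb N}$ irreducible symmetric nonnegative matrices with $A^N_{xy}\to A_{xy}$ uniformly on $\mathcal P(\mathcal X)$ for all $x,y$. For $\mu\in\mathcal P_N(\mathcal X)$ with $\mu_x>0$ and $y\ne x$, $Q^N_{xy}(\mu)=\exp\big(-\frac N2\big(U(\mu+\frac{\delta_y-\delta_x}N)-U(\mu)\big)\big)A^N_{xy}(\mu)$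 (equivalently $Q^N_{x_i,y}(L^N\bm x)=\sqrt{\bm\pi^N_{\bm x^{i;y}}/\bm\pi^N_{\bm x}}A^N_{x_i,y}(L^N\bm x)$ with $\bm\pi^N_{\bm x}\propto\exp(-NU(L^N\bm x))$). *)

theory Defs
  imports "HOL-Analysis.Analysis"
begin

text \<open>The finite state space X is a finite type 'n; measures on X are vectors real^'n.\<close>

definition prob_simplex :: "(real^'n) set" where
  "prob_simplex = {\<mu>. (\<forall>z. 0 \<le> \<mu> $ z) \<and> (\<Sum>z\<in>UNIV. \<mu> $ z) = 1}"

definition empirical_measures :: "nat \<Rightarrow> (real^'n) set" where
  "empirical_measures N = {\<mu>. \<exists>xs :: nat \<Rightarrow> 'n.
      \<mu> = (\<chi> z. real (card {i\<in>{1..N}. xs i = z}) / real N)}"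

definition C2_on :: "'a::euclidean_space set \<Rightarrow> ('a \<Rightarrow> real) \<Rightarrow> bool" where
  "C2_on S f \<longleftrightarrow> (\<exists>(D :: 'a \<Rightarrow> 'a \<Rightarrow>\<^sub>L real) (D2 :: 'a \<Rightarrow> 'a \<Rightarrow>\<^sub>L ('a \<Rightarrow>\<^sub>L real)).
      (\<forall>u\<in>S. (f has_derivative blinfun_apply (D u)) (at u)) \<and>
      (\<forall>u\<in>S. (D has_derivative blinfun_apply (D2 u)) (at u)) \<and>
      continuous_on S D2)"

definition delta_vec :: "'n \<Rightarrow> real^'n" where
  "delta_vec x = axis x 1"

definition energy :: "('n \<Rightarrow> real^'n \<Rightarrow> real) \<Rightarrow> real^'n \<Rightarrow> real" where
  "energy K \<mu> = (\<Sum>z\<in>UNIV. \<mu> $ z * K z \<mu>)"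

definition Hfun :: "('n \<Rightarrow> real^'n \<Rightarrow> real) \<Rightarrow> 'n \<Rightarrow> real^'n \<Rightarrow> real" where
  "Hfun K x \<mu> = deriv (\<lambda>t. energy K (\<mu> + t *\<^sub>R delta_vec x)) 0"

definition gibbs :: "('n \<Rightarrow> real^'n \<Rightarrow> real) \<Rightarrow> 'n \<Rightarrow> real^'n \<Rightarrow> real" where
  "gibbs K x \<mu> = exp (- Hfun K x \<mu>) / (\<Sum>z\<in>UNIV. exp (- Hfun K z \<mu>))"

definition irreducible_mat :: "real^'n^'n \<Rightarrow> bool" where
  "irreducible_mat M \<longleftrightarrow> (\<forall>x y. (x, y) \<in> {(a, b). M $ a $ b > 0}\<^sup>*)"

definition symmetric_mat :: "real^'n^'n \<Rightarrow> bool" where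
  "symmetric_mat M \<longleftrightarrow> transpose M = M"

definition nonneg_mat :: "real^'n^'n \<Rightarrow> bool" where
  "nonneg_mat M \<longleftrightarrow> (\<forall>x y. 0 \<le> M $ x $ y)"

definition QN :: "('n \<Rightarrow> real^'n \<Rightarrow> real) \<Rightarrow> (nat \<Rightarrow> real^'n \<Rightarrow> real^'n^'n)
                  \<Rightarrow> nat \<Rightarrow> 'n \<Rightarrow> 'n \<Rightarrow> real^'n \<Rightarrow> real" where
  "QN K AN N x y \<mu> = exp (- (real N / 2) *
      (energy K (\<mu> + (1 / real N) *\<^sub>R (delta_vec y - delta_vec x)) - energy K \<mu>))
      * AN N \<mu> $ x $ y"

definition Qlim :: "('n \<Rightarrow> real^'n \<Rightarrow> real) \<Rightarrow> (real^'n \<Rightarrow> real^'n^'n)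
                  \<Rightarrow> 'n \<Rightarrow> 'n \<Rightarrow> real^'n \<Rightarrow> real" where
  "Qlim K A x y \<mu> = sqrt (gibbs K y \<mu> / gibbs K x \<mu>) * A \<mu> $ x $ y"

end

theory Submission
  imports Defs
begin

text \<open>
  Moving one particle from \<open>x\<close> to \<open>y\<close> changes the empirical measure by
  \<open>h = (\<delta>\<^sub>y - \<delta>\<^sub>x) / N\<close>, so \<open>N (U(\<mu> + h) - U(\<mu>))\<close> is a difference quotient of \<open>U\<close>
  in direction \<open>\<delta>\<^sub>y - \<delta>\<^sub>x\<close>; since \<open>U(\<mu>) = \<Sum>\<^sub>z \<mu>\<^sub>z K\<^sub>z(\<mu>)\<close> with \<open>K\<^sub>z\<close> continuously
  differentiable on the compact simplex, it converges to \<open>H\<^sub>y(\<mu>) - H\<^sub>x(\<mu>)\<close> uniformly in \<open>\<mu>\<close>.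
  As \<open>Q\<^sub>x\<^sub>y = exp ((H\<^sub>x - H\<^sub>y) / 2) A\<^sub>x\<^sub>y\<close>, the uniform convergence of \<open>Q\<^sup>N\<^sub>x\<^sub>y\<close> follows
  from that of \<open>A\<^sup>N\<^sub>x\<^sub>y\<close>. For the Lipschitz bound, \<open>H\<^sub>x(\<mu>) = \<Sum>\<^sub>z \<mu>\<^sub>z \<partial>\<^sub>x K\<^sub>z(\<mu>) + K\<^sub>x(\<mu>)\<close>
  is Lipschitz because \<open>K\<close> is \<open>C\<^sup>2\<close>, and \<open>exp\<close> and products preserve Lipschitz continuity
  of functions on a compact set.
\<close>

section \<open>The simplex and empirical measures\<close>

lemma convex_prob_simplex: "convex (prob_simplex :: (real^'n::finite) set)"
  unfolding convex_def prob_simplex_def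
  by (auto simp: sum.distrib sum_distrib_left[symmetric])

lemma compact_prob_simplex: "compact (prob_simplex :: (real^'n::finite) set)"
  unfolding compact_eq_bounded_closed
proof
  have "norm \<mu> \<le> 1" if "\<mu> \<in> prob_simplex" for \<mu> :: "real^'n"
    using norm_le_l1_cart[of \<mu>] that unfolding prob_simplex_def by simp
  then show "bounded (prob_simplex :: (real^'n) set)" unfolding bounded_iff by blast
  have "prob_simplex = (\<Inter>z. {\<mu>::real^'n. 0 \<le> \<mu> $ z}) \<inter> {\<mu>. (\<Sum>z\<in>UNIV. \<mu> $ z) = 1}"
    unfolding prob_simplex_def by auto
  moreover have "closed ((\<Inter>z. {\<mu>::real^'n. 0 \<le> \<mu> $ z}) \<inter> {\<mu>. (\<Sum>z\<in>UNIV. \<mu> $ z) = 1})"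
    by (intro closed_Int closed_INT ballI closed_Collect_le closed_Collect_eq continuous_intros)
  ultimately show "closed (prob_simplex :: (real^'n) set)" by simp
qed

lemma sum_card_fibres:
  assumes "finite A"
  shows "(\<Sum>z\<in>(UNIV::'n::finite set). card {i\<in>A. f i = z}) = card A"
proof -
  have "card A = card (\<Union>z. {i\<in>A. f i = z})" by (auto intro: arg_cong[where f=card])
  also have "\<dots> = (\<Sum>z\<in>UNIV. card {i\<in>A. f i = z})"
    by (rule card_UN_disjoint) (use assms in auto)
  finally show ?thesis by simp
qed

lemma empirical_measures_subset_prob_simplex:
  assumes "N \<ge> 1"
  shows "empirical_measures N \<subseteq> (prob_simplex :: (real^'n::finite) set)"
proof
  fix \<mu> :: "real^'n" assume "\<mu> \<in> empirical_measures N"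
  then obtain xs :: "nat \<Rightarrow> 'n" where \<mu>: "\<mu> = (\<chi> z. real (card {i\<in>{1..N}. xs i = z}) / real N)"
    unfolding empirical_measures_def by blast
  have "(\<Sum>z\<in>UNIV. real (card {i\<in>{1..N}. xs i = z})) = real N"
    using sum_card_fibres[of "{1..N}" xs] by (metis card_atLeastAtMost diff_Suc_1 finite_atLeastAtMost of_nat_sum)
  then have "(\<Sum>z\<in>UNIV. \<mu> $ z) = 1"
    using assms unfolding \<mu> by (simp add: sum_divide_distrib[symmetric])
  then show "\<mu> \<in> prob_simplex" unfolding prob_simplex_def \<mu> by simp
qed

lemma empirical_measure_pos_ge:
  assumes "\<mu> \<in> empirical_measures N" "\<mu> $ x > 0"
  shows "\<mu> $ x \<ge> 1 / real N"
proof -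
  obtain xs where \<mu>: "\<mu> = (\<chi> z. real (card {i\<in>{1..N}. xs i = z}) / real N)"
    using assms(1) unfolding empirical_measures_def by blast
  have "card {i\<in>{1..N}. xs i = x} \<noteq> 0"
  proof
    assume "card {i\<in>{1..N}. xs i = x} = 0"
    with assms(2) show False unfolding \<mu> by (simp only: vec_lambda_beta of_nat_0 div_0 less_irrefl)
  qed
  moreover have "real n \<ge> 1" if "n \<noteq> 0" for n :: nat using that by simp
  ultimately have "real (card {i\<in>{1..N}. xs i = x}) \<ge> 1" by blast
  then show ?thesis unfolding \<mu> by (simp add: divide_right_mono)
qed

lemma delta_vec_nth: "delta_vec x $ z = (if z = x then 1 else 0)"
  unfolding delta_vec_def by (simp add: axis_def)

lemma norm_jump_le:
  assumes "N > 0"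
  shows "norm ((1 / N) *\<^sub>R (delta_vec y - delta_vec x :: real^'n::finite)) \<le> 2 / N"
  using norm_triangle_ineq4[of "delta_vec y :: real^'n" "delta_vec x"] assms
  by (simp add: delta_vec_def divide_right_mono)

lemma empirical_jump_in_prob_simplex:
  assumes "N \<ge> 1" "\<mu> \<in> empirical_measures N" "\<mu> $ x > 0" "x \<noteq> y"
  shows "\<mu> + (1 / real N) *\<^sub>R (delta_vec y - delta_vec x) \<in> (prob_simplex :: (real^'n::finite) set)"
proof -
  let ?v = "\<mu> + (1 / real N) *\<^sub>R (delta_vec y - delta_vec x)"
  have \<mu>: "\<mu> \<in> prob_simplex" using empirical_measures_subset_prob_simplex assms(1,2) by blast
  have "\<mu> $ x \<ge> 1 / real N" using empirical_measure_pos_ge assms(2,3) .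
  have v: "?v $ z = \<mu> $ z + (if z = y then 1 / real N else 0) - (if z = x then 1 / real N else 0)" for z
    by (simp add: delta_vec_nth algebra_simps)
  have "0 \<le> ?v $ z" for z
    using \<mu> \<open>\<mu> $ x \<ge> 1 / real N\<close> assms(4) unfolding v prob_simplex_def
    by (cases "z = x"; cases "z = y") auto
  moreover have "(\<Sum>z\<in>UNIV. ?v $ z) = 1"
    using \<mu> assms(4) unfolding v prob_simplex_def by (simp add: sum.distrib sum_subtractf)
  ultimately show ?thesis unfolding prob_simplex_def by blast
qed

section \<open>Lipschitz estimates\<close>

lemma lipschitz_on_convex_if_derivative_bounded:
  fixes f :: "'a::real_normed_vector \<Rightarrow> real"
  assumes "convex T"
    and "\<And>u. u \<in> T \<Longrightarrow> (f has_derivative f' u) (at u)"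
    and "\<And>u h. u \<in> T \<Longrightarrow> \<bar>f' u h\<bar> \<le> B * norm h"
  shows "\<exists>C. C-lipschitz_on T f"
proof -
  have "(max 0 B)-lipschitz_on T f"
  proof (rule bounded_derivative_imp_lipschitz[OF _ assms(1)])
    fix u assume u: "u \<in> T"
    show "(f has_derivative f' u) (at u within T)" using assms(2)[OF u] has_derivative_at_withinI by blast
    show "onorm (f' u) \<le> max 0 B"
    proof (rule onorm_bound)
      fix h
      have "\<bar>f' u h\<bar> \<le> B * norm h" using assms(3)[OF u] .
      also have "\<dots> \<le> max 0 B * norm h" by (simp add: mult_right_mono)
      finally show "norm (f' u h) \<le> max 0 B * norm h" by simp
    qed simp
  qed simp
  then show ?thesis by blast
qed

lemma exp_lipschitz_on_atMost: "(exp M)-lipschitz_on {..M} exp"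
proof (rule bounded_derivative_imp_lipschitz)
  fix x :: real assume "x \<in> {..M}"
  show "(exp has_derivative (\<lambda>h. exp x * h)) (at x within {..M})"
    by (rule has_derivative_at_withinI) (use DERIV_exp[of x] in \<open>simp add: has_field_derivative_def\<close>)
  show "onorm (\<lambda>h. exp x * h) \<le> exp M"
    by (rule onorm_bound) (use \<open>x \<in> {..M}\<close> in \<open>simp_all add: abs_mult mult_right_mono\<close>)
qed auto

lemma lipschitz_on_exp_compact:
  fixes f :: "'a::metric_space \<Rightarrow> real"
  assumes "compact T" "C-lipschitz_on T f"
  shows "\<exists>L. L-lipschitz_on T (\<lambda>u. exp (f u))"
proof -
  obtain M where M: "\<And>u. u \<in> T \<Longrightarrow> norm (f u) \<le> M"
    using continuous_on_compact_bound[OF assms(1) lipschitz_on_continuous_on[OF assms(2)]] by blast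
  have "(exp M)-lipschitz_on (f ` T) exp"
    by (rule lipschitz_on_subset[OF exp_lipschitz_on_atMost]) (use M in force)
  then show ?thesis using lipschitz_on_compose2[OF assms(2)] by blast
qed

lemma lipschitz_on_mult_compact:
  fixes f g :: "'a::metric_space \<Rightarrow> real"
  assumes "compact T" "C-lipschitz_on T f" "D-lipschitz_on T g"
  shows "\<exists>L. L-lipschitz_on T (\<lambda>u. f u * g u)"
proof -
  obtain Mf where "Mf \<ge> 0" and Mf: "\<And>u. u \<in> T \<Longrightarrow> \<bar>f u\<bar> \<le> Mf"
    using continuous_on_compact_bound[OF assms(1) lipschitz_on_continuous_on[OF assms(2)]] by auto
  obtain Mg where "Mg \<ge> 0" and Mg: "\<And>u. u \<in> T \<Longrightarrow> \<bar>g u\<bar> \<le> Mg"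
    using continuous_on_compact_bound[OF assms(1) lipschitz_on_continuous_on[OF assms(3)]] by auto
  have "(Mf * D + Mg * C)-lipschitz_on T (\<lambda>u. f u * g u)"
  proof (rule lipschitz_onI)
    fix x y assume xy: "x \<in> T" "y \<in> T"
    have "f x * g x - f y * g y = f x * (g x - g y) + g y * (f x - f y)" by (simp add: algebra_simps)
    then have "\<bar>f x * g x - f y * g y\<bar> \<le> \<bar>f x\<bar> * \<bar>g x - g y\<bar> + \<bar>g y\<bar> * \<bar>f x - f y\<bar>"
      by (metis abs_mult abs_triangle_ineq)
    also have "\<dots> \<le> Mf * (D * dist x y) + Mg * (C * dist x y)"
      using \<open>Mf \<ge> 0\<close> \<open>Mg \<ge> 0\<close> Mf Mg xy lipschitz_onD[OF assms(2) xy] lipschitz_onD[OF assms(3) xy]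
      by (intro add_mono mult_mono) (auto simp: dist_real_def)
    finally show "dist (f x * g x) (f y * g y) \<le> (Mf * D + Mg * C) * dist x y"
      by (simp add: dist_real_def algebra_simps)
  qed (use \<open>Mf \<ge> 0\<close> \<open>Mg \<ge> 0\<close> lipschitz_on_nonneg[OF assms(2)] lipschitz_on_nonneg[OF assms(3)] in simp)
  then show ?thesis by blast
qed

lemma lipschitz_on_sum:
  fixes f :: "'i \<Rightarrow> 'a::metric_space \<Rightarrow> real"
  assumes "finite I" "\<And>i. i \<in> I \<Longrightarrow> \<exists>C. C-lipschitz_on T (f i)"
  shows "\<exists>C. C-lipschitz_on T (\<lambda>u. \<Sum>i\<in>I. f i u)"
  using assms
proof (induction I rule: finite_induct)
  case empty
  then show ?case using lipschitz_on_constant by fastforce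
next
  case (insert i I)
  then obtain C1 C2 where "C1-lipschitz_on T (f i)" "C2-lipschitz_on T (\<lambda>u. \<Sum>i\<in>I. f i u)" by blast
  from lipschitz_on_add[OF this] show ?case using insert(1,2) by auto
qed

lemma lipschitz_on_vec_nth:
  assumes "C-lipschitz_on T f"
  shows "C-lipschitz_on T (\<lambda>u. f u $ i)"
proof (rule lipschitz_onI)
  fix u v assume "u \<in> T" "v \<in> T"
  have "dist (f u $ i) (f v $ i) \<le> dist (f u) (f v)" by (rule dist_vec_nth_le)
  also have "\<dots> \<le> C * dist u v" using lipschitz_onD[OF assms \<open>u \<in> T\<close> \<open>v \<in> T\<close>] .
  finally show "dist (f u $ i) (f v $ i) \<le> C * dist u v" .
qed (rule lipschitz_on_nonneg[OF assms])

lemma exp_mult_perturbation_le: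
  fixes a a' b b' \<eta> M B :: real
  assumes "\<bar>a' - a\<bar> \<le> \<eta>" "\<bar>b' - b\<bar> \<le> \<eta>" "\<eta> \<le> 1" "\<bar>a\<bar> \<le> M" "\<bar>b\<bar> \<le> B"
  shows "\<bar>exp a' * b' - exp a * b\<bar> \<le> exp (M + 1) * (1 + B) * \<eta>"
proof -
  have "\<bar>exp a' - exp a\<bar> \<le> exp (M + 1) * \<bar>a' - a\<bar>"
    using lipschitz_onD[OF exp_lipschitz_on_atMost, of a' "M + 1" a] assms by (simp add: dist_real_def)
  also have "\<dots> \<le> exp (M + 1) * \<eta>" using assms(1) by simp
  finally have exp_diff: "\<bar>exp a' - exp a\<bar> \<le> exp (M + 1) * \<eta>" .
  have "exp a' * b' - exp a * b = exp a' * (b' - b) + b * (exp a' - exp a)" by (simp add: algebra_simps)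
  then have "\<bar>exp a' * b' - exp a * b\<bar> \<le> exp a' * \<bar>b' - b\<bar> + \<bar>b\<bar> * \<bar>exp a' - exp a\<bar>"
    by (metis abs_mult abs_triangle_ineq abs_exp_cancel)
  also have "\<dots> \<le> exp (M + 1) * \<eta> + B * (exp (M + 1) * \<eta>)"
    using assms exp_diff by (intro add_mono mult_mono) auto
  finally show ?thesis by (simp add: algebra_simps)
qed

lemma uniform_linear_approximation:
  fixes f :: "'a::real_normed_vector \<Rightarrow> real" and D :: "'a \<Rightarrow> ('a \<Rightarrow>\<^sub>L real)"
  assumes "convex T" "compact T"
    and der: "\<And>u. u \<in> T \<Longrightarrow> (f has_derivative blinfun_apply (D u)) (at u)"
    and "continuous_on T D" "\<epsilon> > 0"
  obtains \<delta> where "\<delta> > 0" "\<And>u v. u \<in> T \<Longrightarrow> v \<in> T \<Longrightarrow> norm (v - u) < \<delta> \<Longrightarrow>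
           \<bar>f v - f u - D u (v - u)\<bar> \<le> \<epsilon> * norm (v - u)"
proof -
  obtain \<delta> where "\<delta> > 0" and \<delta>: "\<And>u w. u \<in> T \<Longrightarrow> w \<in> T \<Longrightarrow> dist w u < \<delta> \<Longrightarrow> dist (D w) (D u) < \<epsilon>"
    using compact_uniformly_continuous[OF assms(4,2)] \<open>\<epsilon> > 0\<close> unfolding uniformly_continuous_on_def by metis
  have "\<bar>f v - f u - D u (v - u)\<bar> \<le> \<epsilon> * norm (v - u)"
    if uv: "u \<in> T" "v \<in> T" "norm (v - u) < \<delta>" for u v
  proof -
    have seg: "closed_segment u v \<subseteq> T" using closed_segment_subset[OF uv(1,2) assms(1)] .
    have "norm (f v - f u - D u (v - u)) \<le> norm (v - u) * \<epsilon>"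
    proof (rule differentiable_bound_linearization[where S="closed_segment u v" and f'="\<lambda>w. blinfun_apply (D w)"])
      fix t :: real assume "t \<in> {0..1}"
      then show "u + t *\<^sub>R (v - u) \<in> closed_segment u v"
        unfolding in_segment by (intro exI[of _ t]) (auto simp: algebra_simps)
    next
      fix w assume "w \<in> closed_segment u v"
      then show "(f has_derivative blinfun_apply (D w)) (at w within closed_segment u v)"
        using seg der has_derivative_at_withinI by blast
    next
      fix w assume w: "w \<in> closed_segment u v"
      have "dist w u < \<delta>" using segment_bound1[OF w] uv(3) by (simp add: dist_norm)
      then have "norm (D w - D u) < \<epsilon>" using \<delta>[OF uv(1)] seg w by (auto simp: dist_norm)
      moreover have "blinfun_apply (D w) - blinfun_apply (D u) = blinfun_apply (D w - D u)"
        by (rule ext) (simp add: blinfun.diff_left)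
      ultimately show "onorm (blinfun_apply (D w) - blinfun_apply (D u)) \<le> \<epsilon>"
        by (simp add: norm_blinfun.rep_eq)
    qed simp
    then show ?thesis by (simp add: mult.commute)
  qed
  with \<open>\<delta> > 0\<close> show thesis using that by blast
qed

section \<open>The energy and its partial derivatives\<close>

lemma Hfun_eq:
  fixes K :: "'n::finite \<Rightarrow> real^'n \<Rightarrow> real" and DK :: "'n \<Rightarrow> real^'n \<Rightarrow> ((real^'n) \<Rightarrow>\<^sub>L real)"
  assumes der: "\<And>z. (K z has_derivative blinfun_apply (DK z u)) (at u)"
  shows "Hfun K x u = (\<Sum>z\<in>UNIV. u $ z * DK z u (delta_vec x)) + K x u"
proof -
  define \<delta> where "\<delta> = delta_vec x"
  have K_line: "((\<lambda>t. K z (u + t *\<^sub>R \<delta>)) has_real_derivative DK z u \<delta>) (at 0)" for z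
  proof -
    have "((\<lambda>t::real. u + t *\<^sub>R \<delta>) has_derivative (\<lambda>t. t *\<^sub>R \<delta>)) (at 0)"
      by (auto intro!: derivative_eq_intros)
    from diff_chain_at[OF this] der[of z]
    have "((\<lambda>t. K z (u + t *\<^sub>R \<delta>)) has_derivative (\<lambda>t. DK z u (t *\<^sub>R \<delta>))) (at 0)"
      by (simp add: o_def)
    moreover have "(\<lambda>t. DK z u (t *\<^sub>R \<delta>)) = (*) (DK z u \<delta>)"
      by (rule ext) (simp add: blinfun.scaleR_right)
    ultimately show ?thesis by (simp add: has_field_derivative_def)
  qed
  have coord_line: "((\<lambda>t. (u + t *\<^sub>R \<delta>) $ z) has_real_derivative \<delta> $ z) (at 0)" for z
    by (auto intro!: derivative_eq_intros)
  have "((\<lambda>t. \<Sum>z\<in>UNIV. (u + t *\<^sub>R \<delta>) $ z * K z (u + t *\<^sub>R \<delta>)) has_real_derivative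
      (\<Sum>z\<in>UNIV. \<delta> $ z * K z (u + 0 *\<^sub>R \<delta>) + DK z u \<delta> * (u + 0 *\<^sub>R \<delta>) $ z)) (at 0)"
    by (intro DERIV_sum DERIV_mult coord_line K_line)
  then have "((\<lambda>t. energy K (u + t *\<^sub>R \<delta>)) has_real_derivative
      (\<Sum>z\<in>UNIV. \<delta> $ z * K z u + u $ z * DK z u \<delta>)) (at 0)"
    unfolding energy_def by (simp add: mult.commute)
  then have "Hfun K x u = (\<Sum>z\<in>UNIV. \<delta> $ z * K z u) + (\<Sum>z\<in>UNIV. u $ z * DK z u \<delta>)"
    unfolding Hfun_def \<delta>_def by (simp add: DERIV_imp_deriv sum.distrib)
  also have "(\<Sum>z\<in>UNIV. \<delta> $ z * K z u) = K x u"
  proof -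
    have "(\<Sum>z\<in>UNIV. \<delta> $ z * K z u) = (\<Sum>z\<in>UNIV. if z = x then K z u else 0)"
      by (rule sum.cong) (auto simp: \<delta>_def delta_vec_nth)
    then show ?thesis by simp
  qed
  finally show ?thesis unfolding \<delta>_def by simp
qed

lemma sum_delta_vec_diff:
  "(\<Sum>z\<in>UNIV. (delta_vec y - delta_vec x :: real^'n::finite) $ z * f z) = f y - f x"
proof -
  have "(\<Sum>z\<in>UNIV. (delta_vec y - delta_vec x :: real^'n) $ z * f z)
      = (\<Sum>z\<in>UNIV. (if z = y then f z else 0) - (if z = x then f z else 0))"
    by (rule sum.cong) (auto simp: delta_vec_nth)
  then show ?thesis by (simp add: sum_subtractf)
qed

lemma energy_jump_eq:
  fixes N :: real
  assumes "N \<noteq> 0" "h = (1 / N) *\<^sub>R (delta_vec y - delta_vec x)"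
  shows "N * (energy K (\<mu> + h) - energy K \<mu>)
       = (\<Sum>z\<in>UNIV. \<mu> $ z * (N * (K z (\<mu> + h) - K z \<mu>))) + (K y (\<mu> + h) - K x (\<mu> + h))"
proof -
  have jump: "N * h $ z = (delta_vec y - delta_vec x) $ z" for z using assms by simp
  have "N * (energy K (\<mu> + h) - energy K \<mu>)
      = (\<Sum>z\<in>UNIV. \<mu> $ z * (N * (K z (\<mu> + h) - K z \<mu>)) + N * h $ z * K z (\<mu> + h))"
    unfolding energy_def sum_subtractf[symmetric] sum_distrib_left
    by (rule sum.cong) (simp_all add: algebra_simps)
  then show ?thesis
    using sum_delta_vec_diff[of y x "\<lambda>z. K z (\<mu> + h)"] by (simp add: jump sum.distrib)
qed

lemma Hfun_diff_eq:
  assumes "\<And>z. (K z has_derivative blinfun_apply (DK z \<mu>)) (at \<mu>)"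
  shows "Hfun K y \<mu> - Hfun K x \<mu>
       = (\<Sum>z\<in>UNIV. \<mu> $ z * DK z \<mu> (delta_vec y - delta_vec x)) + (K y \<mu> - K x \<mu>)"
  unfolding Hfun_eq[of K DK, OF assms]
  by (simp add: blinfun.diff_right right_diff_distrib sum_subtractf)

lemma energy_difference_quotient_error:
  fixes K :: "'n::finite \<Rightarrow> real^'n \<Rightarrow> real" and N e :: real
  assumes "N > 0" "\<mu> \<in> prob_simplex" "h = (1 / N) *\<^sub>R (delta_vec y - delta_vec x)"
    and der: "\<And>z. (K z has_derivative blinfun_apply (DK z \<mu>)) (at \<mu>)"
    and linear_error: "\<And>z. \<bar>K z (\<mu> + h) - K z \<mu> - DK z \<mu> h\<bar> \<le> e * norm h"
    and increment: "\<And>z. \<bar>K z (\<mu> + h) - K z \<mu>\<bar> \<le> e"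
  shows "\<bar>N * (energy K (\<mu> + h) - energy K \<mu>) - (Hfun K y \<mu> - Hfun K x \<mu>)\<bar> \<le> 4 * e"
proof -
  let ?v = "\<mu> + h"
  let ?r = "\<lambda>z. N * (K z ?v - K z \<mu> - DK z \<mu> h)"
  have "DK z \<mu> (delta_vec y - delta_vec x) = N * DK z \<mu> h" for z
    using assms(1,3) by (simp add: blinfun.scaleR_right)
  then have H: "Hfun K y \<mu> - Hfun K x \<mu> = (\<Sum>z\<in>UNIV. \<mu> $ z * (N * DK z \<mu> h)) + (K y \<mu> - K x \<mu>)"
    using Hfun_diff_eq[of K DK, OF der] by simp
  have "(\<Sum>z\<in>UNIV. \<mu> $ z * (N * (K z ?v - K z \<mu>))) - (\<Sum>z\<in>UNIV. \<mu> $ z * (N * DK z \<mu> h))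
      = (\<Sum>z\<in>UNIV. \<mu> $ z * ?r z)"
    by (simp add: sum_subtractf[symmetric] algebra_simps)
  then have "N * (energy K ?v - energy K \<mu>) - (Hfun K y \<mu> - Hfun K x \<mu>)
      = (\<Sum>z\<in>UNIV. \<mu> $ z * ?r z) + (K y ?v - K y \<mu>) - (K x ?v - K x \<mu>)"
    using H energy_jump_eq[OF _ assms(3)] assms(1) by simp
  moreover have "\<bar>\<Sum>z\<in>UNIV. \<mu> $ z * ?r z\<bar> \<le> 2 * e"
  proof -
    have "norm h \<le> 2 / N" unfolding assms(3) by (rule norm_jump_le[OF assms(1)])
    then have "N * norm h \<le> 2" using assms(1) by (simp add: field_simps)
    moreover have "e \<ge> 0" using increment[of x] by linarith
    ultimately have "\<bar>?r z\<bar> \<le> 2 * e" for z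
    proof -
      have "\<bar>?r z\<bar> \<le> N * (e * norm h)"
        using linear_error[of z] assms(1) by (simp add: abs_mult)
      also have "\<dots> = e * (N * norm h)" by simp
      also have "\<dots> \<le> e * 2" using \<open>N * norm h \<le> 2\<close> \<open>e \<ge> 0\<close> by (rule mult_left_mono)
      finally show ?thesis by simp
    qed
    then have "\<bar>\<Sum>z\<in>UNIV. \<mu> $ z * ?r z\<bar> \<le> (\<Sum>z\<in>UNIV. \<mu> $ z * (2 * e))"
      using assms(2) unfolding prob_simplex_def
      by (intro order_trans[OF sum_abs] sum_mono) (simp add: abs_mult mult_left_mono)
    also have "\<dots> = 2 * e" using assms(2) unfolding prob_simplex_def by (simp add: sum_distrib_right[symmetric])
    finally show ?thesis .
  qed
  ultimately show ?thesis using increment[of x] increment[of y] by linarith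
qed

lemma Qlim_eq_exp: "Qlim K A x y \<mu> = exp ((Hfun K x \<mu> - Hfun K y \<mu>) / 2) * A \<mu> $ x $ y"
proof -
  have "(\<Sum>z\<in>UNIV. exp (- Hfun K z \<mu>)) > 0" by (intro sum_pos) auto
  then have "gibbs K y \<mu> / gibbs K x \<mu> = exp ((Hfun K x \<mu> - Hfun K y \<mu>) / 2) ^ 2"
    unfolding gibbs_def by (simp add: exp_diff[symmetric] exp_add[symmetric] power2_eq_square)
  then show ?thesis unfolding Qlim_def by simp
qed

section \<open>Interaction potentials of class \<open>C\<^sup>2\<close> on the simplex\<close>

locale C2_interaction =
  fixes K :: "'n::finite \<Rightarrow> real^'n \<Rightarrow> real"
    and DK :: "'n \<Rightarrow> real^'n \<Rightarrow> ((real^'n) \<Rightarrow>\<^sub>L real)"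
    and D2K :: "'n \<Rightarrow> real^'n \<Rightarrow> ((real^'n) \<Rightarrow>\<^sub>L ((real^'n) \<Rightarrow>\<^sub>L real))"
  assumes K_has_derivative: "u \<in> prob_simplex \<Longrightarrow> (K z has_derivative blinfun_apply (DK z u)) (at u)"
    and DK_has_derivative: "u \<in> prob_simplex \<Longrightarrow> (DK z has_derivative blinfun_apply (D2K z u)) (at u)"
    and D2K_continuous_on: "continuous_on prob_simplex (D2K z)"
begin

lemma K_continuous_on: "continuous_on prob_simplex (K z)"
  by (rule continuous_at_imp_continuous_on) (use K_has_derivative has_derivative_continuous in blast)

lemma DK_continuous_on: "continuous_on prob_simplex (DK z)"
  by (rule continuous_at_imp_continuous_on) (use DK_has_derivative has_derivative_continuous in blast)

lemma K_lipschitz: "\<exists>C. C-lipschitz_on prob_simplex (K z)"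
proof -
  obtain B where B: "\<And>u :: real^'n. u \<in> prob_simplex \<Longrightarrow> norm (DK z u) \<le> B"
    using continuous_on_compact_bound[OF compact_prob_simplex DK_continuous_on] by blast
  show ?thesis
  proof (rule lipschitz_on_convex_if_derivative_bounded[OF convex_prob_simplex K_has_derivative])
    fix u :: "real^'n" and h assume "u \<in> prob_simplex"
    have "\<bar>DK z u h\<bar> \<le> norm (DK z u) * norm h" using norm_blinfun by (metis real_norm_def)
    also have "\<dots> \<le> B * norm h" using B[OF \<open>u \<in> prob_simplex\<close>] by (simp add: mult_right_mono)
    finally show "\<bar>DK z u h\<bar> \<le> B * norm h" .
  qed
qed

lemma DK_apply_lipschitz: "\<exists>C. C-lipschitz_on prob_simplex (\<lambda>u. DK z u w)"
proof -
  obtain B where B: "\<And>u :: real^'n. u \<in> prob_simplex \<Longrightarrow> norm (D2K z u) \<le> B"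
    using continuous_on_compact_bound[OF compact_prob_simplex D2K_continuous_on] by blast
  show ?thesis
  proof (rule lipschitz_on_convex_if_derivative_bounded[OF convex_prob_simplex])
    fix u :: "real^'n" assume "u \<in> prob_simplex"
    show "((\<lambda>u. DK z u w) has_derivative (\<lambda>h. D2K z u h w)) (at u)"
      using blinfun.FDERIV[OF DK_has_derivative[OF \<open>u \<in> prob_simplex\<close>] has_derivative_const]
      by (simp add: blinfun.zero_right)
    fix h
    have "\<bar>D2K z u h w\<bar> \<le> norm (D2K z u) * norm h * norm w"
      using norm_blinfun[of "D2K z u h" w] norm_blinfun[of "D2K z u" h]
      by (simp add: mult_right_mono order_trans)
    also have "\<dots> \<le> B * norm w * norm h"
      using mult_right_mono[OF B[OF \<open>u \<in> prob_simplex\<close>], of "norm h * norm w"] by (simp add: ac_simps)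
    finally show "\<bar>D2K z u h w\<bar> \<le> B * norm w * norm h" .
  qed
qed

lemma Hfun_lipschitz: "\<exists>C. C-lipschitz_on prob_simplex (Hfun K x)"
proof -
  have "\<exists>C. C-lipschitz_on prob_simplex (\<lambda>u. u $ z * DK z u (delta_vec x))" for z
    using lipschitz_on_mult_compact[OF compact_prob_simplex lipschitz_on_vec_nth[OF lipschitz_on_id]]
      DK_apply_lipschitz by blast
  then obtain C1 where "C1-lipschitz_on prob_simplex (\<lambda>u. \<Sum>z\<in>UNIV. u $ z * DK z u (delta_vec x))"
    using lipschitz_on_sum[where I=UNIV and f="\<lambda>z u. u $ z * DK z u (delta_vec x)"] by auto
  moreover obtain C2 where "C2-lipschitz_on prob_simplex (K x)" using K_lipschitz by blast
  ultimately have "(C1 + C2)-lipschitz_on prob_simplex (Hfun K x)"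
    by (rule lipschitz_on_transform[OF lipschitz_on_add]) (simp add: Hfun_eq K_has_derivative)
  then show ?thesis by blast
qed

lemma Qlim_lipschitz:
  assumes "C-lipschitz_on prob_simplex (\<lambda>\<mu>. A \<mu> $ x $ y)"
  shows "\<exists>L. L-lipschitz_on prob_simplex (Qlim K A x y)"
proof -
  obtain Cx Cy where "Cx-lipschitz_on prob_simplex (Hfun K x)" "Cy-lipschitz_on prob_simplex (Hfun K y)"
    using Hfun_lipschitz by blast
  from lipschitz_on_cmult_real[OF lipschitz_on_diff[OF this], of "1 / 2"]
  obtain CE where "CE-lipschitz_on prob_simplex (\<lambda>\<mu>. exp ((Hfun K x \<mu> - Hfun K y \<mu>) / 2))"
    using lipschitz_on_exp_compact[OF compact_prob_simplex] by fastforce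
  then show ?thesis
    using lipschitz_on_mult_compact[OF compact_prob_simplex _ assms] by (simp add: Qlim_eq_exp[abs_def])
qed

lemma K_expansion_eventually:
  assumes "e > 0"
  shows "\<forall>\<^sub>F N in sequentially. \<forall>u\<in>prob_simplex. \<forall>v\<in>prob_simplex. norm (v - u) \<le> 2 / real N \<longrightarrow>
    \<bar>K z v - K z u - DK z u (v - u)\<bar> \<le> e * norm (v - u) \<and> \<bar>K z v - K z u\<bar> \<le> e"
proof -
  obtain \<delta>1 where "\<delta>1 > 0" and \<delta>1: "\<And>u v. u \<in> prob_simplex \<Longrightarrow> v \<in> prob_simplex \<Longrightarrow>
      norm (v - u) < \<delta>1 \<Longrightarrow> \<bar>K z v - K z u - DK z u (v - u)\<bar> \<le> e * norm (v - u)"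
    using uniform_linear_approximation[OF convex_prob_simplex compact_prob_simplex
        K_has_derivative DK_continuous_on, of e] \<open>e > 0\<close> by auto
  obtain \<delta>2 where "\<delta>2 > 0" and \<delta>2: "\<And>u v. u \<in> prob_simplex \<Longrightarrow> v \<in> prob_simplex \<Longrightarrow>
      dist v u < \<delta>2 \<Longrightarrow> dist (K z v) (K z u) < e"
    using compact_uniformly_continuous[OF K_continuous_on compact_prob_simplex] \<open>e > 0\<close>
    unfolding uniformly_continuous_on_def by metis
  have "\<forall>\<^sub>F N in sequentially. 2 / real N < min \<delta>1 \<delta>2"
    using order_tendstoD(2)[OF lim_const_over_n[of "2::real"], of "min \<delta>1 \<delta>2"] \<open>\<delta>1 > 0\<close> \<open>\<delta>2 > 0\<close>
    by simp
  then show ?thesis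
  proof eventually_elim
    case (elim N)
    show ?case
    proof (intro ballI impI conjI)
      fix u v :: "real^'n" assume uv: "u \<in> prob_simplex" "v \<in> prob_simplex" "norm (v - u) \<le> 2 / real N"
      then show "\<bar>K z v - K z u - DK z u (v - u)\<bar> \<le> e * norm (v - u)" using \<delta>1 elim by simp
      show "\<bar>K z v - K z u\<bar> \<le> e" using \<delta>2[OF uv(1,2)] uv(3) elim by (simp add: dist_norm dist_real_def)
    qed
  qed
qed

lemma energy_difference_quotient_converges:
  assumes "x \<noteq> y" "e > 0"
  shows "\<forall>\<^sub>F N in sequentially. \<forall>\<mu>\<in>empirical_measures N. \<mu> $ x > 0 \<longrightarrow>
    \<bar>real N * (energy K (\<mu> + (1 / real N) *\<^sub>R (delta_vec y - delta_vec x)) - energy K \<mu>)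
       - (Hfun K y \<mu> - Hfun K x \<mu>)\<bar> \<le> e"
proof -
  have "\<forall>\<^sub>F N in sequentially. \<forall>z. \<forall>u\<in>prob_simplex. \<forall>v\<in>prob_simplex. norm (v - u) \<le> 2 / real N \<longrightarrow>
      \<bar>K z v - K z u - DK z u (v - u)\<bar> \<le> e / 4 * norm (v - u) \<and> \<bar>K z v - K z u\<bar> \<le> e / 4"
    using K_expansion_eventually[of "e / 4"] \<open>e > 0\<close> by (intro eventually_all_finite) simp
  moreover have "\<forall>\<^sub>F N in sequentially. N \<ge> 1" by simp
  ultimately show ?thesis
  proof eventually_elim
    case (elim N)
    show ?case
    proof (intro ballI impI)
      fix \<mu> assume \<mu>: "\<mu> \<in> empirical_measures N" "\<mu> $ x > 0"
      define h where "h = (1 / real N) *\<^sub>R (delta_vec y - delta_vec x :: real^'n)"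
      have "real N > 0" using elim(2) by simp
      have "\<mu> \<in> prob_simplex" using empirical_measures_subset_prob_simplex elim(2) \<mu>(1) by blast
      moreover have "\<mu> + h \<in> prob_simplex"
        unfolding h_def using empirical_jump_in_prob_simplex elim(2) \<mu> assms(1) by blast
      moreover have "norm h \<le> 2 / real N" unfolding h_def by (rule norm_jump_le) fact
      ultimately have "\<bar>K z (\<mu> + h) - K z \<mu> - DK z \<mu> h\<bar> \<le> e / 4 * norm h \<and> \<bar>K z (\<mu> + h) - K z \<mu>\<bar> \<le> e / 4"
        for z using elim(1)[THEN spec[of _ z], THEN bspec[of _ _ \<mu>], THEN bspec[of _ _ "\<mu> + h"]] by simp
      then have "\<bar>real N * (energy K (\<mu> + h) - energy K \<mu>) - (Hfun K y \<mu> - Hfun K x \<mu>)\<bar> \<le> 4 * (e / 4)"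
        using \<open>\<mu> \<in> prob_simplex\<close>
        by (intro energy_difference_quotient_error[OF \<open>real N > 0\<close> _ h_def K_has_derivative]) auto
      then show "\<bar>real N * (energy K (\<mu> + (1 / real N) *\<^sub>R (delta_vec y - delta_vec x)) - energy K \<mu>)
          - (Hfun K y \<mu> - Hfun K x \<mu>)\<bar> \<le> e"
        unfolding h_def by simp
    qed
  qed
qed

lemma QN_converges:
  assumes "uniform_limit prob_simplex (\<lambda>N \<mu>. AN N \<mu> $ x $ y) (\<lambda>\<mu>. A \<mu> $ x $ y) sequentially"
    and "continuous_on prob_simplex (\<lambda>\<mu>. A \<mu> $ x $ y)" "x \<noteq> y" "\<epsilon> > 0"
  shows "\<forall>\<^sub>F N in sequentially. \<forall>\<mu>\<in>empirical_measures N. \<mu> $ x > 0 \<longrightarrow>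
    \<bar>QN K AN N x y \<mu> - Qlim K A x y \<mu>\<bar> < \<epsilon>"
proof -
  have "continuous_on prob_simplex (Hfun K z)" for z
    using Hfun_lipschitz lipschitz_on_continuous_on by blast
  then have "continuous_on prob_simplex (\<lambda>\<mu>. (Hfun K x \<mu> - Hfun K y \<mu>) / 2)"
    by (intro continuous_intros) auto
  then obtain M where M: "\<And>\<mu>. \<mu> \<in> prob_simplex \<Longrightarrow> norm ((Hfun K x \<mu> - Hfun K y \<mu>) / 2) \<le> M"
    using continuous_on_compact_bound[OF compact_prob_simplex] by blast
  obtain B where "B \<ge> 0" and B: "\<And>\<mu>. \<mu> \<in> prob_simplex \<Longrightarrow> norm (A \<mu> $ x $ y) \<le> B"
    using continuous_on_compact_bound[OF compact_prob_simplex assms(2)] by blast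
  define c where "c = exp (M + 1) * (1 + B)"
  define \<eta> where "\<eta> = min 1 (\<epsilon> / (2 * c))"
  have "c > 0" unfolding c_def using \<open>B \<ge> 0\<close> by (simp add: add_pos_nonneg)
  then have "\<eta> > 0" "\<eta> \<le> 1" "c * \<eta> < \<epsilon>"
    unfolding \<eta>_def using \<open>\<epsilon> > 0\<close> by (auto simp: min_def field_simps)
  have "\<forall>\<^sub>F N in sequentially. \<forall>\<mu>\<in>empirical_measures N. \<mu> $ x > 0 \<longrightarrow>
    \<bar>real N * (energy K (\<mu> + (1 / real N) *\<^sub>R (delta_vec y - delta_vec x)) - energy K \<mu>)
       - (Hfun K y \<mu> - Hfun K x \<mu>)\<bar> \<le> 2 * \<eta>"
    using energy_difference_quotient_converges assms(3) \<open>\<eta> > 0\<close> by simp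
  moreover have "\<forall>\<^sub>F N in sequentially. \<forall>\<mu>\<in>prob_simplex. \<bar>AN N \<mu> $ x $ y - A \<mu> $ x $ y\<bar> < \<eta>"
    using assms(1) \<open>\<eta> > 0\<close> unfolding uniform_limit_iff dist_real_def by blast
  moreover have "\<forall>\<^sub>F N in sequentially. N \<ge> 1" by simp
  ultimately show ?thesis
  proof eventually_elim
    case (elim N)
    show ?case
    proof (intro ballI impI)
      fix \<mu> assume \<mu>: "\<mu> \<in> empirical_measures N" "\<mu> $ x > 0"
      then have "\<mu> \<in> prob_simplex" using empirical_measures_subset_prob_simplex elim(3) by blast
      let ?a' = "- (real N / 2) * (energy K (\<mu> + (1 / real N) *\<^sub>R (delta_vec y - delta_vec x)) - energy K \<mu>)"
      let ?a = "(Hfun K x \<mu> - Hfun K y \<mu>) / 2"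
      have "\<bar>?a' - ?a\<bar> \<le> \<eta>" using elim(1) \<mu> by (auto simp: field_simps abs_minus_commute)
      moreover have "\<bar>AN N \<mu> $ x $ y - A \<mu> $ x $ y\<bar> \<le> \<eta>" using elim(2) \<open>\<mu> \<in> prob_simplex\<close> by fastforce
      ultimately have "\<bar>exp ?a' * AN N \<mu> $ x $ y - exp ?a * A \<mu> $ x $ y\<bar> \<le> c * \<eta>"
        unfolding c_def using exp_mult_perturbation_le \<open>\<eta> \<le> 1\<close> M[unfolded real_norm_def] B[unfolded real_norm_def]
          \<open>\<mu> \<in> prob_simplex\<close> by blast
      then show "\<bar>QN K AN N x y \<mu> - Qlim K A x y \<mu>\<bar> < \<epsilon>"
        unfolding QN_def Qlim_eq_exp using \<open>c * \<eta> < \<epsilon>\<close> by simp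
    qed
  qed
qed

end

lemma C2_on_imp_C2_interaction:
  fixes K :: "'n::finite \<Rightarrow> real^'n \<Rightarrow> real"
  assumes "prob_simplex \<subseteq> S" "\<And>z. C2_on S (K z)"
  obtains DK D2K where "C2_interaction K DK D2K"
proof -
  have "\<forall>z. \<exists>D D2. (\<forall>u\<in>S. (K z has_derivative blinfun_apply (D u)) (at u)) \<and>
      (\<forall>u\<in>S. (D has_derivative blinfun_apply (D2 u)) (at u)) \<and> continuous_on S D2"
    using assms(2) unfolding C2_on_def by blast
  then obtain DK D2K where "\<And>z. (\<forall>u\<in>S. (K z has_derivative blinfun_apply (DK z u)) (at u)) \<and>
      (\<forall>u\<in>S. (DK z has_derivative blinfun_apply (D2K z u)) (at u)) \<and> continuous_on S (D2K z)"
    by metis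
  then have "C2_interaction K DK D2K"
    using assms(1) by unfold_locales (auto intro: continuous_on_subset)
  then show thesis by (rule that)
qed

theorem lemma3p4:
  fixes K :: "'n::finite \<Rightarrow> real^'n \<Rightarrow> real"
    and A :: "real^'n \<Rightarrow> real^'n^'n"
    and AN :: "nat \<Rightarrow> real^'n \<Rightarrow> real^'n^'n"
  assumes K_C2: "\<exists>S. open S \<and> prob_simplex \<subseteq> S \<and> (\<forall>x. C2_on S (K x))"
    and A_mat: "\<forall>\<mu>\<in>prob_simplex. irreducible_mat (A \<mu>) \<and> symmetric_mat (A \<mu>) \<and> nonneg_mat (A \<mu>)"
    and A_lip: "\<exists>C. C-lipschitz_on prob_simplex A"
    and AN_mat: "\<forall>N\<ge>1. \<forall>\<mu>\<in>prob_simplex.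
                   irreducible_mat (AN N \<mu>) \<and> symmetric_mat (AN N \<mu>) \<and> nonneg_mat (AN N \<mu>)"
    and AN_conv: "\<forall>x y. uniform_limit prob_simplex (\<lambda>N \<mu>. AN N \<mu> $ x $ y) (\<lambda>\<mu>. A \<mu> $ x $ y) sequentially"
  shows "(\<forall>x y. x \<noteq> y \<longrightarrow>
            (\<forall>\<epsilon>>0. \<exists>N0. \<forall>N\<ge>N0. \<forall>\<mu>\<in>empirical_measures N. \<mu> $ x > 0 \<longrightarrow>
                \<bar>QN K AN N x y \<mu> - Qlim K A x y \<mu>\<bar> < \<epsilon>))
       \<and> (\<forall>x y. \<exists>C. C-lipschitz_on prob_simplex (Qlim K A x y))"
proof -
  obtain S where "prob_simplex \<subseteq> S" "\<And>z. C2_on S (K z)" using K_C2 by blast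
  then obtain DK D2K where "C2_interaction K DK D2K" by (rule C2_on_imp_C2_interaction)
  then interpret C2_interaction K DK D2K .
  obtain C where "C-lipschitz_on prob_simplex A" using A_lip by blast
  then have A_entry: "C-lipschitz_on prob_simplex (\<lambda>\<mu>. A \<mu> $ x $ y)" for x y
    by (intro lipschitz_on_vec_nth)
  show ?thesis
  proof (intro conjI allI impI)
    fix x y :: 'n and \<epsilon> :: real assume "x \<noteq> y" "\<epsilon> > 0"
    with QN_converges[OF AN_conv[rule_format] lipschitz_on_continuous_on[OF A_entry]]
    show "\<exists>N0. \<forall>N\<ge>N0. \<forall>\<mu>\<in>empirical_measures N. \<mu> $ x > 0 \<longrightarrow>
        \<bar>QN K AN N x y \<mu> - Qlim K A x y \<mu>\<bar> < \<epsilon>"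
      unfolding eventually_sequentially by blast
  next
    fix x y
    show "\<exists>C. C-lipschitz_on prob_simplex (Qlim K A x y)" by (rule Qlim_lipschitz[OF A_entry])
  qed
qed

end
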